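(* Let \[ A^0_1=\begin{pmatrix}-4&0\\-6&0\end{pmatrix},\ A^0_2=\begin{pmatrix}-2&-15\\-3&-15\end{pmatrix},\ A^0_3=\begin{pmatrix}2&-1\\-3&-5\end{pmatrix},\ A^0_4=\begin{pmatrix}2&8\\0&7\end{pmatrix},\ A^0_5=\begin{pmatrix}0&0\\2&1\end{pmatrix}, \] \[ B^0_1=\begin{pmatrix}138&0\\328&0\end{pmatrix},\ B^0_2=\begin{pmatrix}69&495\\164&-246\end{pmatrix},\ B^0_3=\begin{pmatrix}1685&1781\\1476&1230\end{pmatrix},\ B^0_4=\begin{pmatrix}188&-571\\492&246\end{pmatrix},\ B^0_5=\begin{pmatrix}-378&-189\\-492&-246\end{pmatrix}, \] and $X^0_j=\begin{bmatrix}A^0_j\\ B^0_j\end{bmatrix}\in\mathbb M^{4\times 2}$. Then there is $\epsilon_0>0$ such that for every $\epsilon\in(0,\epsilon_0)$ there exists a smooth convex function $G\colon\mathbb M^{2\times 2}\times\mathbb R\to\mathbb R$ such that the (smooth, strongly polyconvex) function $F_0(A)=\frac{\epsilon}{2}|A|^2+G(A,\det A)$ satisfies $X^0_j\in K_{F_0}$, i.e. $B^0_j=DF_0(A^0_j)J$, for $j=1,\dots,5$.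
   Context: $\mathbb M^{m\times n}$ is the space of real $m\times n$ matrices, $|\cdot|$ the Frobenius norm, $J=\begin{pmatrix}0&-1\\1&0\end{pmatrix}$. For $F\colon\mathbb M^{2\times 2}\to\mathbb R$ of class $C^1$, $K_F=\left\{\begin{bmatrix}A\\ DF(A)J\end{bmatrix}: A\in\mathbb M^{2\times 2}\right\}\subset\mathbb M^{4\times 2}$, where $\begin{bmatrix}A\\ B\end{bmatrix}$ denotes the $4\times 2$ matrix with upper $2\times 2$ block $A$ and lower block $B$. *)

theory Defs
  imports "HOL-Analysis.Analysis"
begin

text \<open>2x2 real matrices are rendered as real^2^2 (rows indexed first).
  The Euclidean norm on real^2^2 is the Frobenius norm, and the inner
  product is the Frobenius inner product.\<close>

definition mat2 :: "real \<Rightarrow> real \<Rightarrow> real \<Rightarrow> real \<Rightarrow> real^2^2" where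
  "mat2 a b c d = vector [vector [a, b], vector [c, d]]"

definition Jmat :: "real^2^2" where
  "Jmat = mat2 0 (-1) 1 0"

definition DF :: "(real^2^2 \<Rightarrow> real) \<Rightarrow> real^2^2 \<Rightarrow> real^2^2" where
  "DF F A = (THE M. (F has_derivative (\<lambda>H. M \<bullet> H)) (at A))"

definition stack :: "real^2^2 \<Rightarrow> real^2^2 \<Rightarrow> real^2^4" where
  "stack A B = (\<chi> i. if i = 1 then A$1 else if i = 2 then A$2
                     else if i = 3 then B$1 else B$2)"

definition KF :: "(real^2^2 \<Rightarrow> real) \<Rightarrow> (real^2^4) set" where
  "KF F = {stack A (DF F A ** Jmat) | A. True}"

fun iter_dderiv :: "('a::real_normed_vector \<Rightarrow> real) \<Rightarrow> 'a list \<Rightarrow> ('a \<Rightarrow> real)" where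
  "iter_dderiv f [] = f"
| "iter_dderiv f (v # vs) = iter_dderiv (\<lambda>x. frechet_derivative f (at x) v) vs"

definition smooth :: "('a::euclidean_space \<Rightarrow> real) \<Rightarrow> bool" where
  "smooth f \<longleftrightarrow> (\<forall>vs x. iter_dderiv f vs differentiable (at x))"

definition A0 :: "nat \<Rightarrow> real^2^2" where
  "A0 j = (if j = 1 then mat2 (-4) 0 (-6) 0
      else if j = 2 then mat2 (-2) (-15) (-3) (-15)
      else if j = 3 then mat2 2 (-1) (-3) (-5)
      else if j = 4 then mat2 2 8 0 7
      else mat2 0 0 2 1)"

definition B0 :: "nat \<Rightarrow> real^2^2" where
  "B0 j = (if j = 1 then mat2 138 0 328 0
      else if j = 2 then mat2 69 495 164 (-246)
      else if j = 3 then mat2 1685 1781 1476 1230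
      else if j = 4 then mat2 188 (-571) 492 246
      else mat2 (-378) (-189) (-492) (-246))"

definition X0 :: "nat \<Rightarrow> real^2^4" where
  "X0 j = stack (A0 j) (B0 j)"

end

theory Submission
  imports Defs "HOL-Computational_Algebra.Polynomial"
begin

text \<open>
  Take \<open>G\<close> to be \<open>(\<epsilon>\<^sub>0 - \<epsilon>)/2 |A|\<^sup>2\<close> plus an affine function of \<open>(A, d)\<close> plus five ridges
  \<open>c h(\<langle>W\<^sub>j, (A, d)\<rangle> - t\<^sub>j)\<close>, where \<open>h(u) = u e\<^sup>-\<^sup>1\<^sup>/\<^sup>u\<close> for \<open>u > 0\<close> and \<open>h(u) = 0\<close> otherwise.
  Then \<open>h\<close> is smooth and convex, so \<open>G\<close> is smooth and convex for \<open>\<epsilon> \<le> \<epsilon>\<^sub>0\<close>, and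
  \<open>DF\<^sub>0(A) = \<epsilon>\<^sub>0 A + D\<^sub>AG + \<partial>\<^sub>dG cof A\<close> does not depend on \<open>\<epsilon>\<close>. The ridges are placed so that
  at \<open>(A\<^sup>0\<^sub>i, det A\<^sup>0\<^sub>i)\<close> only the \<open>i\<close>-th one is active, with argument \<open>1\<close> and slope normalised
  to \<open>1\<close>, while the others vanish to first order. Hence \<open>DF\<^sub>0(A\<^sup>0\<^sub>i) J = B\<^sup>0\<^sub>i\<close> reduces to an
  identity between explicit \<open>2\<times>2\<close> matrices.
\<close>

section \<open>The smooth convex ramp\<close>

text \<open>For \<open>u > 0\<close> the derivative of \<open>p(1/u) e\<^sup>-\<^sup>1\<^sup>/\<^sup>u\<close> is \<open>q(1/u) e\<^sup>-\<^sup>1\<^sup>/\<^sup>u\<close> with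
  \<open>q = x\<^sup>2 (p - p')\<close>, so \<^term>\<open>ramp_deriv n\<close> is the \<open>n\<close>-th derivative of \<^term>\<open>ramp_deriv 0\<close>.\<close>

fun ramp_poly :: "nat \<Rightarrow> real poly" where
  "ramp_poly 0 = [:1, 1:]"
| "ramp_poly (Suc n) = [:0, 0, 1:] * (ramp_poly n - pderiv (ramp_poly n))"

fun ramp_deriv :: "nat \<Rightarrow> real \<Rightarrow> real" where
  "ramp_deriv 0 u = (if u \<le> 0 then 0 else u * exp (-1/u))"
| "ramp_deriv (Suc n) u = (if u \<le> 0 then 0 else poly (ramp_poly n) (1/u) * exp (-1/u))"

declare ramp_deriv.simps [simp del]

lemma ramp_deriv_nonpos: "u \<le> 0 \<Longrightarrow> ramp_deriv n u = 0"
  by (cases n) (simp_all add: ramp_deriv.simps)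

lemma tendsto_poly_mult_exp_neg_at_top:
  "((\<lambda>w. poly p w * exp (-w)) \<longlongrightarrow> (0::real)) at_top"
proof -
  have "((\<lambda>w. \<Sum>i\<le>degree p. coeff p i * (w ^ i / exp w)) \<longlongrightarrow> (\<Sum>i\<le>degree p. coeff p i * 0)) at_top"
    by (intro tendsto_sum tendsto_mult tendsto_const tendsto_power_div_exp_0)
  moreover have "poly p w * exp (-w) = (\<Sum>i\<le>degree p. coeff p i * (w ^ i / exp w))" for w
    by (simp add: poly_altdef exp_minus sum_distrib_right divide_inverse mult.assoc)
  ultimately show ?thesis
    by simp
qed

lemma tendsto_poly_inverse_mult_exp_at_right_0:
  "((\<lambda>u. poly p (1/u) * exp (-1/u)) \<longlongrightarrow> (0::real)) (at_right 0)"
  using filterlim_compose[OF tendsto_poly_mult_exp_neg_at_top filterlim_inverse_at_top_right]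
  by (simp add: inverse_eq_divide)

lemma ramp_deriv_has_real_derivative_pos:
  assumes "u > 0"
  shows "(ramp_deriv n has_real_derivative ramp_deriv (Suc n) u) (at u)"
proof -
  have "(ramp_deriv n has_real_derivative poly (ramp_poly n) (1/u) * exp (-1/u)) (at u)"
  proof (cases n)
    case 0
    have "((\<lambda>u. u * exp (-1/u)) has_real_derivative poly (ramp_poly 0) (1/u) * exp (-1/u)) (at u)"
      using assms by (auto intro!: derivative_eq_intros simp: field_simps power2_eq_square)
    then show ?thesis
      unfolding 0
      by (rule has_field_derivative_transform_within_open[where S="{0<..}"])
         (use assms in \<open>auto simp: ramp_deriv.simps\<close>)
  next
    case (Suc m)
    have "((\<lambda>u. poly (ramp_poly m) (1/u) * exp (-1/u)) has_real_derivative
        poly (ramp_poly n) (1/u) * exp (-1/u)) (at u)"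
      using assms Suc by (auto intro!: derivative_eq_intros simp: field_simps power2_eq_square)
    then show ?thesis
      unfolding Suc
      by (rule has_field_derivative_transform_within_open[where S="{0<..}"])
         (use assms in \<open>auto simp: ramp_deriv.simps\<close>)
  qed
  then show ?thesis
    using assms by (simp add: ramp_deriv.simps)
qed

lemma ramp_deriv_has_real_derivative_0: "(ramp_deriv n has_real_derivative 0) (at 0)"
proof -
  obtain q where q: "\<And>h. h > 0 \<Longrightarrow> ramp_deriv n h / h = poly q (1/h) * exp (-1/h)"
  proof (cases n)
    case 0
    then show ?thesis
      using that[of "[:1:]"] by (simp add: ramp_deriv.simps)
  next
    case (Suc m)
    then show ?thesis
      using that[of "[:0, 1:] * ramp_poly m"] by (simp add: ramp_deriv.simps field_simps)
  qed
  have "\<forall>\<^sub>F h in at_right 0. poly q (1/h) * exp (-1/h) = ramp_deriv n h / h"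
    by (rule eventually_mono[OF eventually_at_right_less]) (simp add: q)
  with tendsto_poly_inverse_mult_exp_at_right_0
  have "((\<lambda>h. ramp_deriv n h / h) \<longlongrightarrow> 0) (at_right 0)"
    by (rule Lim_transform_eventually)
  moreover have "\<forall>\<^sub>F h in at_left 0. 0 = ramp_deriv n h / h"
    by (rule eventually_at_leftI[of "-1"]) (simp_all add: ramp_deriv_nonpos)
  with tendsto_const have "((\<lambda>h. ramp_deriv n h / h) \<longlongrightarrow> 0) (at_left 0)"
    by (rule Lim_transform_eventually)
  ultimately show ?thesis
    unfolding DERIV_def by (simp add: filterlim_split_at ramp_deriv_nonpos)
qed

lemma ramp_deriv_has_real_derivative:
  "(ramp_deriv n has_real_derivative ramp_deriv (Suc n) u) (at u)"
proof -
  consider "u > 0" | "u < 0" | "u = 0"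
    by linarith
  then show ?thesis
  proof cases
    case 1
    then show ?thesis
      by (rule ramp_deriv_has_real_derivative_pos)
  next
    case 2
    have "((\<lambda>x. 0) has_real_derivative 0) (at u)"
      by simp
    then have "(ramp_deriv n has_real_derivative 0) (at u)"
      by (rule has_field_derivative_transform_within_open[where S="{..<0}"])
         (use 2 in \<open>auto simp: ramp_deriv_nonpos\<close>)
    then show ?thesis
      using 2 by (simp add: ramp_deriv_nonpos)
  next
    case 3
    then show ?thesis
      using ramp_deriv_has_real_derivative_0 by (simp add: ramp_deriv_nonpos)
  qed
qed

lemma convex_on_ramp: "convex_on UNIV (ramp_deriv 0)"
proof (rule convex_on_realI[where f'="ramp_deriv 1"])
  show "(ramp_deriv 0 has_real_derivative ramp_deriv 1 x) (at x)" for x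
    using ramp_deriv_has_real_derivative[of 0] by simp
  have "(ramp_deriv 1 has_real_derivative ramp_deriv 2 u) (at u)" for u
    using ramp_deriv_has_real_derivative[of 1] by (simp add: numeral_2_eq_2)
  moreover have "ramp_deriv 2 u \<ge> 0" for u
    by (simp add: ramp_deriv.simps numeral_2_eq_2 pderiv_pCons)
  ultimately show "ramp_deriv 1 x \<le> ramp_deriv 1 y" if "x \<le> y" for x y
    using DERIV_nonneg_imp_nondecreasing[OF that] by blast
qed simp

section \<open>A class of smooth functions\<close>

lemma has_derivative_ramp_deriv [derivative_intros]:
  assumes "(g has_derivative g') (at x)"
  shows "((\<lambda>x. ramp_deriv n (g x)) has_derivative (\<lambda>h. ramp_deriv (Suc n) (g x) * g' h)) (at x)"
  using has_derivative_compose[OF assms ramp_deriv_has_real_derivative[unfolded has_field_derivative_def]]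
  by (simp add: o_def mult.commute)

text \<open>In \<open>sqnorm\<close> the map \<open>L\<close> is an endomorphism because an inductive rule cannot
  introduce a type variable that does not occur in the type of the predicate.\<close>

inductive ramp_span :: "('a::real_inner \<Rightarrow> real) \<Rightarrow> bool" where
  const: "ramp_span (\<lambda>x. c)"
| linear: "bounded_linear f \<Longrightarrow> ramp_span f"
| sqnorm: "bounded_linear (L :: 'a \<Rightarrow> 'a) \<Longrightarrow> ramp_span (\<lambda>x. (norm (L x))\<^sup>2)"
| ridge: "ramp_span (\<lambda>x. ramp_deriv n (a \<bullet> x - t))"
| scale: "ramp_span f \<Longrightarrow> ramp_span (\<lambda>x. c * f x)"
| add: "ramp_span f \<Longrightarrow> ramp_span g \<Longrightarrow> ramp_span (\<lambda>x. f x + g x)"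

lemma ramp_span_sum:
  "finite S \<Longrightarrow> (\<And>i. i \<in> S \<Longrightarrow> ramp_span (f i)) \<Longrightarrow> ramp_span (\<lambda>x. \<Sum>i\<in>S. f i x)"
  by (induction S rule: finite_induct) (auto intro: ramp_span.const[of 0] ramp_span.add)

lemma ramp_span_has_derivative:
  assumes "ramp_span f"
  shows "\<exists>f'. (\<forall>x. (f has_derivative f' x) (at x)) \<and> (\<forall>v. ramp_span (\<lambda>x. f' x v))"
  using assms
proof induction
  case (const c)
  show ?case
    by (rule exI[of _ "\<lambda>x h. 0"]) (auto intro: ramp_span.const)
next
  case (linear f)
  show ?case
    by (rule exI[of _ "\<lambda>x. f"])
       (auto intro: ramp_span.const bounded_linear_imp_has_derivative[OF linear])
next
  case (sqnorm L)
  have "((\<lambda>x. (norm (L x))\<^sup>2) has_derivative (\<lambda>h. 2 * (L x \<bullet> L h))) (at x)" for x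
    using has_derivative_compose[OF bounded_linear_imp_has_derivative[OF sqnorm] has_derivative_sqnorm_at]
    by (simp add: o_def)
  moreover have "ramp_span (\<lambda>x. 2 * (L x \<bullet> L v))" for v
    by (intro ramp_span.linear bounded_linear_intros sqnorm)
  ultimately show ?case
    by (intro exI[of _ "\<lambda>x h. 2 * (L x \<bullet> L h)"]) blast
next
  case (ridge n a t)
  have "((\<lambda>x. ramp_deriv n (a \<bullet> x - t)) has_derivative
      (\<lambda>h. ramp_deriv (Suc n) (a \<bullet> x - t) * (a \<bullet> h))) (at x)" for x
    by (auto intro!: derivative_eq_intros)
  moreover have "ramp_span (\<lambda>x. ramp_deriv (Suc n) (a \<bullet> x - t) * (a \<bullet> v))" for v
    using ramp_span.scale[OF ramp_span.ridge, of "a \<bullet> v"] by (simp add: mult.commute)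
  ultimately show ?case
    by (intro exI[of _ "\<lambda>x h. ramp_deriv (Suc n) (a \<bullet> x - t) * (a \<bullet> h)"]) blast
next
  case (scale f c)
  then obtain f' where "\<forall>x. (f has_derivative f' x) (at x)" "\<forall>v. ramp_span (\<lambda>x. f' x v)"
    by blast
  then show ?case
    by (intro exI[of _ "\<lambda>x h. c * f' x h"]) (auto intro: has_derivative_mult_right ramp_span.scale)
next
  case (add f g)
  then obtain f' g' where
    "\<forall>x. (f has_derivative f' x) (at x)" "\<forall>v. ramp_span (\<lambda>x. f' x v)"
    "\<forall>x. (g has_derivative g' x) (at x)" "\<forall>v. ramp_span (\<lambda>x. g' x v)"
    by blast
  then show ?case
    by (intro exI[of _ "\<lambda>x h. f' x h + g' x h"]) (auto intro: has_derivative_add ramp_span.add)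
qed

lemma ramp_span_smooth:
  fixes f :: "'a::euclidean_space \<Rightarrow> real"
  assumes "ramp_span f"
  shows "smooth f"
proof -
  have "iter_dderiv f vs differentiable (at x)" if "ramp_span f" for vs x and f :: "'a \<Rightarrow> real"
    using that
  proof (induction vs arbitrary: f)
    case Nil
    then show ?case
      using ramp_span_has_derivative[OF Nil] by (auto simp: differentiable_def)
  next
    case (Cons v vs)
    obtain f' where f': "\<forall>x. (f has_derivative f' x) (at x)" "\<forall>v. ramp_span (\<lambda>x. f' x v)"
      using ramp_span_has_derivative[OF Cons.prems] by blast
    then have "(\<lambda>x. frechet_derivative f (at x) v) = (\<lambda>x. f' x v)"
      using frechet_derivative_at by metis
    then show ?case
      using Cons.IH f'(2) by simp
  qed
  then show ?thesis
    using assms unfolding smooth_def by blast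
qed

lemma convex_on_linear: "convex S \<Longrightarrow> linear f \<Longrightarrow> convex_on S f"
  by (auto intro!: convex_onI simp: linear_add linear_scale)

lemma convex_on_compose_affine:
  assumes "linear L" "convex_on UNIV f"
  shows "convex_on UNIV (\<lambda>x. f (L x + c))"
proof (rule convex_onI)
  interpret L: linear L by fact
  fix t :: real and x y assume "0 < t" "t < 1"
  have "L ((1 - t) *\<^sub>R x + t *\<^sub>R y) + c = (1 - t) *\<^sub>R (L x + c) + t *\<^sub>R (L y + c)"
    unfolding L.add L.scale by (simp add: algebra_simps)
  then show "f (L ((1 - t) *\<^sub>R x + t *\<^sub>R y) + c) \<le> (1 - t) * f (L x + c) + t * f (L y + c)"
    using convex_onD[OF assms(2), of t] \<open>0 < t\<close> \<open>t < 1\<close> by simp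
qed simp

lemma convex_on_sqnorm: "convex_on UNIV (\<lambda>x::'a::real_normed_vector. (norm x)\<^sup>2)"
proof (rule convex_onI)
  fix t :: real and x y :: 'a assume t: "0 < t" "t < 1"
  have "norm ((1 - t) *\<^sub>R x + t *\<^sub>R y) \<le> (1 - t) * norm x + t * norm y"
    using t norm_triangle_ineq[of "(1 - t) *\<^sub>R x" "t *\<^sub>R y"] by simp
  then have "(norm ((1 - t) *\<^sub>R x + t *\<^sub>R y))\<^sup>2 \<le> ((1 - t) * norm x + t * norm y)\<^sup>2"
    by (rule power_mono) simp
  also have "\<dots> \<le> (1 - t) * (norm x)\<^sup>2 + t * (norm y)\<^sup>2"
    using convex_onD[OF convex_power2, of t "norm x" "norm y"] t by simp
  finally show "(norm ((1 - t) *\<^sub>R x + t *\<^sub>R y))\<^sup>2 \<le> (1 - t) * (norm x)\<^sup>2 + t * (norm y)\<^sup>2" .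
qed simp

lemma convex_on_sum_fun:
  "finite I \<Longrightarrow> convex S \<Longrightarrow> (\<And>i. i \<in> I \<Longrightarrow> convex_on S (f i)) \<Longrightarrow> convex_on S (\<lambda>x. \<Sum>i\<in>I. f i x)"
  by (induction I rule: finite_induct) (auto simp: convex_on_const)

lemma mat2_nth [simp]:
  "mat2 a b c d $ 1 $ 1 = a" "mat2 a b c d $ 1 $ 2 = b"
  "mat2 a b c d $ 2 $ 1 = c" "mat2 a b c d $ 2 $ 2 = d"
  by (simp_all add: mat2_def)

lemma mat2_eq_iff: "mat2 a b c d = mat2 a' b' c' d' \<longleftrightarrow> a = a' \<and> b = b' \<and> c = c' \<and> d = d'"
  by (auto simp: vec_eq_iff forall_2)

lemma inner_mat2_entries:
  "(A::real^2^2) \<bullet> B = A$1$1 * B$1$1 + A$1$2 * B$1$2 + A$2$1 * B$2$1 + A$2$2 * B$2$2"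
  by (simp add: inner_vec_def sum_2)

lemma inner_mat2 [simp]: "mat2 a b c d \<bullet> mat2 a' b' c' d' = a * a' + b * b' + c * c' + d * d'"
  by (simp add: inner_mat2_entries)

lemma det_mat2 [simp]: "det (mat2 a b c d) = a * d - b * c"
  by (simp add: det_2)

lemma mat2_add [simp]: "mat2 a b c d + mat2 a' b' c' d' = mat2 (a + a') (b + b') (c + c') (d + d')"
  by (simp add: vec_eq_iff forall_2)

lemma mat2_scaleR [simp]: "r *\<^sub>R mat2 a b c d = mat2 (r * a) (r * b) (r * c) (r * d)"
  by (simp add: vec_eq_iff forall_2)

lemma mat2_mult [simp]:
  "mat2 a b c d ** mat2 a' b' c' d' =
    mat2 (a * a' + b * c') (a * b' + b * d') (c * a' + d * c') (c * b' + d * d')"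
  by (simp add: vec_eq_iff forall_2 matrix_matrix_mult_def sum_2)

definition cof2 :: "real^2^2 \<Rightarrow> real^2^2" where
  "cof2 A = mat2 (A$2$2) (-(A$2$1)) (-(A$1$2)) (A$1$1)"

lemma cof2_mat2 [simp]: "cof2 (mat2 a b c d) = mat2 d (-c) (-b) a"
  by (simp add: cof2_def)

lemma has_derivative_det2: "(det has_derivative (\<lambda>H. cof2 A \<bullet> H)) (at (A::real^2^2))"
proof -
  have entry: "((\<lambda>A::real^2^2. A$i$k) has_derivative (\<lambda>H. H$i$k)) (at A)" for i k
    by (intro bounded_linear_imp_has_derivative bounded_linear_compose[OF bounded_linear_vec_nth]
        bounded_linear_vec_nth)
  have "((\<lambda>A::real^2^2. A$1$1 * A$2$2 - A$1$2 * A$2$1) has_derivative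
      (\<lambda>H. (A$1$1 * H$2$2 + H$1$1 * A$2$2) - (A$1$2 * H$2$1 + H$1$2 * A$2$1))) (at A)"
    by (intro has_derivative_diff has_derivative_mult entry)
  moreover have "det = (\<lambda>A::real^2^2. A$1$1 * A$2$2 - A$1$2 * A$2$1)"
    by (simp add: fun_eq_iff det_2)
  ultimately show ?thesis
    by (auto elim!: has_derivative_eq_rhs simp: fun_eq_iff cof2_def inner_mat2_entries algebra_simps)
qed

lemma DF_eqI:
  assumes "(F has_derivative (\<lambda>H. M \<bullet> H)) (at A)"
  shows "DF F A = M"
  unfolding DF_def
proof (rule the_equality)
  fix M' assume "(F has_derivative (\<lambda>H. M' \<bullet> H)) (at A)"
  from has_derivative_unique[OF this assms]
  have "M' \<bullet> (M' - M) = M \<bullet> (M' - M)"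
    by meson
  then have "(M' - M) \<bullet> (M' - M) = 0"
    by (simp add: inner_diff_left)
  then show "M' = M"
    by simp
qed (rule assms)

lemma DF_polyconvex:
  assumes "(G has_derivative (\<lambda>z. (M, m) \<bullet> z)) (at (A, det A))"
  shows "DF (\<lambda>A. \<epsilon> / 2 * (norm A)\<^sup>2 + G (A, det A)) A = \<epsilon> *\<^sub>R A + M + m *\<^sub>R cof2 A"
proof (rule DF_eqI)
  have "((\<lambda>A. (A, det A)) has_derivative (\<lambda>H. (H, cof2 A \<bullet> H))) (at A)"
    by (intro has_derivative_Pair has_derivative_ident has_derivative_det2)
  from has_derivative_compose[OF this assms]
  have "((\<lambda>A. G (A, det A)) has_derivative (\<lambda>H. M \<bullet> H + m * (cof2 A \<bullet> H))) (at A)"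
    by (simp add: o_def)
  then have "((\<lambda>A. \<epsilon> / 2 * (norm A)\<^sup>2 + G (A, det A)) has_derivative
      (\<lambda>H. \<epsilon> / 2 * (2 *\<^sub>R (A \<bullet> H)) + (M \<bullet> H + m * (cof2 A \<bullet> H)))) (at A)"
    by (intro has_derivative_add has_derivative_mult_right has_derivative_sqnorm_at)
  then show "((\<lambda>A. \<epsilon> / 2 * (norm A)\<^sup>2 + G (A, det A)) has_derivative
      (\<lambda>H. (\<epsilon> *\<^sub>R A + M + m *\<^sub>R cof2 A) \<bullet> H)) (at A)"
    by (rule has_derivative_eq_rhs) (simp add: fun_eq_iff inner_add_left)
qed

section \<open>The construction\<close>

definition eps0 :: real where
  "eps0 = 1/100"

definition affine_slope :: "(real^2^2) \<times> real" where
  "affine_slope = (mat2 (667/4) (-70) (-19/2) (-1), 335)"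

definition ridge :: "nat \<Rightarrow> (real^2^2) \<times> real" where
  "ridge j =
    (if j = 1 then (mat2 (-16671/100) (-319/2) (239/25) 574, -1095/4)
     else if j = 2 then (mat2 (-77423/100) (3233/20) (36803/100) (3003/20), -685/2)
     else if j = 3 then (mat2 (190973/100) (-55949/100) (-199197/100) (-1319/20), 873/2)
     else if j = 4 then (mat2 (349/50) (6448/25) (435/2) (37943/100), -1113/4)
     else (mat2 (-709/2) (891/2) (6387/25) (-49101/100), 167/4))"

definition ridge_level :: "nat \<Rightarrow> real" where
  "ridge_level j =
    (if j = 1 then 15212/25 else if j = 2 then 90387/100 else if j = 3 then 500911/100
     else if j = 4 then 83683/100 else 379/20)"

text \<open>From here on the first derivative is written \<^term>\<open>ramp_deriv (Suc 0)\<close>: the simp rule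
  \<open>One_nat_def\<close> turns \<open>1 :: nat\<close> into \<open>Suc 0\<close>, so lemmas stated with \<open>1\<close> would not rewrite.\<close>

definition ridge_weight :: real where
  "ridge_weight = 1 / ramp_deriv (Suc 0) 1"

definition G_witness :: "real \<Rightarrow> (real^2^2) \<times> real \<Rightarrow> real" where
  "G_witness \<epsilon> x = (eps0 - \<epsilon>) / 2 * (norm (fst x))\<^sup>2 + affine_slope \<bullet> x
     + (\<Sum>j\<in>{1..5}. ridge_weight * ramp_deriv 0 (ridge j \<bullet> x - ridge_level j))"

lemma ramp_deriv_1_1: "ramp_deriv (Suc 0) 1 = 2 * exp (-1)"
  by (simp add: ramp_deriv.simps)

lemma ridge_weight_pos: "ridge_weight > 0"
  unfolding ridge_weight_def ramp_deriv_1_1 by simp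

lemma smooth_G_witness: "smooth (G_witness \<epsilon>)"
proof -
  have "bounded_linear (\<lambda>x::(real^2^2) \<times> real. (fst x, 0::real))"
    by (intro bounded_linear_Pair bounded_linear_fst bounded_linear_zero)
  then have "ramp_span (\<lambda>x. (eps0 - \<epsilon>) / 2 * (norm (fst x, 0::real))\<^sup>2 + affine_slope \<bullet> x
     + (\<Sum>j\<in>{1..5}. ridge_weight * ramp_deriv 0 (ridge j \<bullet> x - ridge_level j)))"
    by (intro ramp_span.add ramp_span.scale ramp_span.sqnorm ramp_span.linear ramp_span_sum
        ramp_span.ridge bounded_linear_inner_right finite_atLeastAtMost)
  then show ?thesis
    by (intro ramp_span_smooth) (simp add: G_witness_def[abs_def] norm_Pair)
qed

lemma convex_on_G_witness:
  assumes "\<epsilon> \<le> eps0"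
  shows "convex_on UNIV (G_witness \<epsilon>)"
proof -
  have "convex_on UNIV (\<lambda>x::(real^2^2) \<times> real. (norm (fst x))\<^sup>2)"
    using convex_on_compose_affine[OF linear_fst convex_on_sqnorm, of 0] by simp
  then have "convex_on UNIV (\<lambda>x::(real^2^2) \<times> real. (eps0 - \<epsilon>) / 2 * (norm (fst x))\<^sup>2)"
    using assms by (intro convex_on_cmul) auto
  moreover have "convex_on UNIV (\<lambda>x. affine_slope \<bullet> x)"
    by (intro convex_on_linear convex_UNIV bounded_linear.linear[OF bounded_linear_inner_right])
  moreover have "convex_on UNIV (\<lambda>x. ramp_deriv 0 (ridge j \<bullet> x - ridge_level j))" for j
    using convex_on_compose_affine[OF bounded_linear.linear[OF bounded_linear_inner_right]
        convex_on_ramp, of "ridge j" "- ridge_level j"]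
    by simp
  then have "convex_on UNIV
      (\<lambda>x. \<Sum>j\<in>{1..5}. ridge_weight * ramp_deriv 0 (ridge j \<bullet> x - ridge_level j))"
    using ridge_weight_pos by (intro convex_on_sum_fun convex_on_cmul) auto
  ultimately show ?thesis
    unfolding G_witness_def[abs_def] by (intro convex_on_add)
qed

lemma G_witness_has_derivative:
  "(G_witness \<epsilon> has_derivative
    (\<lambda>z. ((eps0 - \<epsilon>) *\<^sub>R (fst x, 0) + affine_slope
      + (\<Sum>j\<in>{1..5}. (ridge_weight * ramp_deriv (Suc 0) (ridge j \<bullet> x - ridge_level j)) *\<^sub>R ridge j)) \<bullet> z))
    (at x)"
proof -
  have "((\<lambda>x. (norm (fst x))\<^sup>2) has_derivative (\<lambda>z. 2 * (fst x \<bullet> fst z))) (at x)"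
    using has_derivative_compose[OF has_derivative_fst[OF has_derivative_ident] has_derivative_sqnorm_at]
    by (simp add: o_def)
  moreover have "((\<lambda>x. ramp_deriv 0 (ridge j \<bullet> x - ridge_level j)) has_derivative
      (\<lambda>z. ramp_deriv (Suc 0) (ridge j \<bullet> x - ridge_level j) * (ridge j \<bullet> z))) (at x)" for j
    by (auto intro!: derivative_eq_intros)
  ultimately have "(G_witness \<epsilon> has_derivative
    (\<lambda>z. (eps0 - \<epsilon>) / 2 * (2 * (fst x \<bullet> fst z)) + affine_slope \<bullet> z
      + (\<Sum>j\<in>{1..5}. ridge_weight * (ramp_deriv (Suc 0) (ridge j \<bullet> x - ridge_level j) * (ridge j \<bullet> z))))) (at x)"
    unfolding G_witness_def[abs_def]
    by (intro has_derivative_add has_derivative_mult_right has_derivative_sum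
        bounded_linear_imp_has_derivative bounded_linear_inner_right)
  then show ?thesis
    by (rule has_derivative_eq_rhs)
       (simp add: fun_eq_iff inner_add_left inner_sum_left inner_Pair_0 mult.assoc)
qed

lemma ridge_argument_at_A0:
  assumes "i \<in> {1..5}" "j \<in> {1..5}"
  shows "if j = i then ridge j \<bullet> (A0 i, det (A0 i)) - ridge_level j = 1
         else ridge j \<bullet> (A0 i, det (A0 i)) - ridge_level j \<le> 0"
proof -
  have "i = 1 \<or> i = 2 \<or> i = 3 \<or> i = 4 \<or> i = 5" "j = 1 \<or> j = 2 \<or> j = 3 \<or> j = 4 \<or> j = 5"
    using assms by auto
  then show ?thesis
    by (elim disjE) (simp_all add: ridge_def ridge_level_def A0_def)
qed

lemma ridge_slope_at_A0:
  assumes "i \<in> {1..5}" "j \<in> {1..5}"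
  shows "ridge_weight * ramp_deriv (Suc 0) (ridge j \<bullet> (A0 i, det (A0 i)) - ridge_level j)
    = (if j = i then 1 else 0)"
  using ridge_argument_at_A0[OF assms] ramp_deriv_1_1
  by (auto simp: ridge_weight_def ramp_deriv_nonpos split: if_splits)

lemma DF_witness_at_A0:
  assumes "i \<in> {1..5}"
  shows "DF (\<lambda>A. \<epsilon> / 2 * (norm A)\<^sup>2 + G_witness \<epsilon> (A, det A)) (A0 i)
    = eps0 *\<^sub>R A0 i + fst (affine_slope + ridge i) + snd (affine_slope + ridge i) *\<^sub>R cof2 (A0 i)"
proof -
  define p where "p = (eps0 - \<epsilon>) *\<^sub>R (A0 i, 0) + affine_slope + ridge i"
  have "(\<Sum>j\<in>{1..5}. (ridge_weight * ramp_deriv (Suc 0) (ridge j \<bullet> (A0 i, det (A0 i)) - ridge_level j))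
      *\<^sub>R ridge j) = (\<Sum>j\<in>{1..5}. if j = i then ridge j else 0)"
  proof (rule sum.cong)
    fix j :: nat assume "j \<in> {1..5}"
    then show "(ridge_weight * ramp_deriv (Suc 0) (ridge j \<bullet> (A0 i, det (A0 i)) - ridge_level j))
        *\<^sub>R ridge j = (if j = i then ridge j else 0)"
      unfolding ridge_slope_at_A0[OF assms \<open>j \<in> {1..5}\<close>] by simp
  qed simp
  also have "\<dots> = ridge i"
    using assms by simp
  finally have "(G_witness \<epsilon> has_derivative (\<lambda>z. p \<bullet> z)) (at (A0 i, det (A0 i)))"
    using G_witness_has_derivative[of \<epsilon> "(A0 i, det (A0 i))"] by (simp add: p_def)
  then have "DF (\<lambda>A. \<epsilon> / 2 * (norm A)\<^sup>2 + G_witness \<epsilon> (A, det A)) (A0 i)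
      = \<epsilon> *\<^sub>R A0 i + fst p + snd p *\<^sub>R cof2 (A0 i)"
    by (intro DF_polyconvex) simp
  also have "\<dots> = eps0 *\<^sub>R A0 i + fst (affine_slope + ridge i) + snd (affine_slope + ridge i) *\<^sub>R cof2 (A0 i)"
    by (simp add: p_def algebra_simps)
  finally show ?thesis .
qed

lemma witness_gradient_J_at_A0:
  assumes "i \<in> {1..5}"
  shows "(eps0 *\<^sub>R A0 i + fst (affine_slope + ridge i) + snd (affine_slope + ridge i) *\<^sub>R cof2 (A0 i))
    ** Jmat = B0 i"
proof -
  have "i = 1 \<or> i = 2 \<or> i = 3 \<or> i = 4 \<or> i = 5"
    using assms by auto
  then show ?thesis
    by (elim disjE)
       (simp_all add: A0_def B0_def affine_slope_def ridge_def eps0_def Jmat_def mat2_eq_iff)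
qed

theorem proposition2p3:
  shows "\<exists>\<epsilon>0::real. \<epsilon>0 > 0 \<and>
    (\<forall>\<epsilon>. 0 < \<epsilon> \<and> \<epsilon> < \<epsilon>0 \<longrightarrow>
      (\<exists>G :: (real^2^2) \<times> real \<Rightarrow> real.
         smooth G \<and> convex_on UNIV G \<and>
         (\<forall>j\<in>{1..5::nat}.
            X0 j \<in> KF (\<lambda>A. \<epsilon> / 2 * (norm A)\<^sup>2 + G (A, det A)))))"
proof (intro exI[of _ eps0] conjI allI impI)
  show "eps0 > 0"
    by (simp add: eps0_def)
next
  fix \<epsilon> :: real
  assume "0 < \<epsilon> \<and> \<epsilon> < eps0"
  then have "convex_on UNIV (G_witness \<epsilon>)"
    by (intro convex_on_G_witness) simp
  moreover have "X0 j \<in> KF (\<lambda>A. \<epsilon> / 2 * (norm A)\<^sup>2 + G_witness \<epsilon> (A, det A))" if "j \<in> {1..5}" for j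
  proof -
    have "B0 j = DF (\<lambda>A. \<epsilon> / 2 * (norm A)\<^sup>2 + G_witness \<epsilon> (A, det A)) (A0 j) ** Jmat"
      using DF_witness_at_A0[OF that] witness_gradient_J_at_A0[OF that] by simp
    then show ?thesis
      unfolding KF_def X0_def by (intro CollectI exI[of _ "A0 j"]) simp
  qed
  ultimately show "\<exists>G. smooth G \<and> convex_on UNIV G \<and>
      (\<forall>j\<in>{1..5}. X0 j \<in> KF (\<lambda>A. \<epsilon> / 2 * (norm A)\<^sup>2 + G (A, det A)))"
    using smooth_G_witness by blast
qed

end
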